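(* For all $n\geq 0$, the bijection $\Psi_n:\mathfrak{S}_n\to\mathcal{PP}(n)$ is an isomorphism of posets when $\mathfrak{S}_n$ is ordered by the weak Bruhat order and $\mathcal{PP}(n)$ by $\leq$: for all $\sigma,\tau\in\mathfrak{S}_n$, $\sigma\leq\tau$ if and only if $\Psi_n(\sigma)\leq\Psi_n(\tau)$.
   Context: A plane poset is a finite set with two partial orders $\leq_h,\leq_r$ such that two distinct elements are $\leq_h$-comparable iff they are not $\leq_r$-comparable; $\mathcal{PP}(n)$ is the set of isomorphism classes of plane posets with $n$ elements. On a plane poset, $x\leq y$ iff ($x\leq_h y$ or $x\leq_r y$) is a total order (known fact). For $P,Q\in\mathcal{PP}(n)$, $\theta_{P,Q}$ is the increasing bijection $P\to Q$ for these total orders, and $P\leq Q$ means: for all $x,y\in P$, $\theta_{P,Q}(x)\leq_h\theta_{P,Q}(y)$ in $Q$ implies $x\leq_h y$ in $P$. For $\sigma\in\mathfrak{S}_n$, $\Psi_n(\sigma)$ is the plane poset on $\{1,\ldots,n\}$ with $a\leq_h b$ iff ($a\leq b$ and $\sigma^{-1}(a)\leq\sigma^{-1}(b)$) and $a\leq_r b$ iff ($a\leq b$ and $\sigma^{-1}(a)\geq\sigma^{-1}(b)$); $\Psi_n$ is known to be a bijection. The weak Bruhat order on $\mathfrak{S}_n$: $\sigma\leq\tau$ iff there is a sequence $\sigma=\sigma_0,\ldots,\sigma_k=\tau$ where each word $\sigma_{p+1}(1)\cdots\sigma_{p+1}(n)$ is obtained from $\sigma_p(1)\cdots\sigma_p(n)$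 by exchanging two consecutive letters $ij$ with $i<j$ (into $ji$). *)

theory Defs
  imports "HOL-Combinatorics.Permutations"
begin

record 'a bipos =
  carrier :: "'a set"
  hle :: "'a \<Rightarrow> 'a \<Rightarrow> bool"
  rle :: "'a \<Rightarrow> 'a \<Rightarrow> bool"

definition partial_order_on' :: "'a set \<Rightarrow> ('a \<Rightarrow> 'a \<Rightarrow> bool) \<Rightarrow> bool" where
  "partial_order_on' A R \<longleftrightarrow>
     (\<forall>x\<in>A. R x x) \<and>
     (\<forall>x\<in>A. \<forall>y\<in>A. R x y \<and> R y x \<longrightarrow> x = y) \<and>
     (\<forall>x\<in>A. \<forall>y\<in>A. \<forall>z\<in>A. R x y \<and> R y z \<longrightarrow> R x z)"

definition plane_poset :: "'a bipos \<Rightarrow> bool" where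
  "plane_poset P \<longleftrightarrow> finite (carrier P) \<and>
     partial_order_on' (carrier P) (hle P) \<and>
     partial_order_on' (carrier P) (rle P) \<and>
     (\<forall>x\<in>carrier P. \<forall>y\<in>carrier P. x \<noteq> y \<longrightarrow>
        ((hle P x y \<or> hle P y x) \<longleftrightarrow> \<not> (rle P x y \<or> rle P y x)))"

definition tle :: "'a bipos \<Rightarrow> 'a \<Rightarrow> 'a \<Rightarrow> bool" where
  "tle P x y \<longleftrightarrow> hle P x y \<or> rle P x y"

definition is_theta :: "'a bipos \<Rightarrow> 'b bipos \<Rightarrow> ('a \<Rightarrow> 'b) \<Rightarrow> bool" where
  "is_theta P Q f \<longleftrightarrow> bij_betw f (carrier P) (carrier Q) \<and>
     (\<forall>x\<in>carrier P. \<forall>y\<in>carrier P. tle P x y \<longrightarrow> tle Q (f x) (f y))"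

definition pp_le :: "'a bipos \<Rightarrow> 'b bipos \<Rightarrow> bool" where
  "pp_le P Q \<longleftrightarrow> (\<exists>f. is_theta P Q f \<and>
     (\<forall>x\<in>carrier P. \<forall>y\<in>carrier P. hle Q (f x) (f y) \<longrightarrow> hle P x y))"

definition Psi :: "nat \<Rightarrow> (nat \<Rightarrow> nat) \<Rightarrow> nat bipos" where
  "Psi n \<sigma> = \<lparr> carrier = {1..n},
      hle = (\<lambda>a b. a \<le> b \<and> inv \<sigma> a \<le> inv \<sigma> b),
      rle = (\<lambda>a b. a \<le> b \<and> inv \<sigma> a \<ge> inv \<sigma> b) \<rparr>"

definition weak_step :: "nat \<Rightarrow> (nat \<Rightarrow> nat) \<Rightarrow> (nat \<Rightarrow> nat) \<Rightarrow> bool" where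
  "weak_step n \<sigma> \<tau> \<longleftrightarrow> (\<exists>p. 1 \<le> p \<and> p < n \<and> \<sigma> p < \<sigma> (Suc p) \<and>
      \<tau> = \<sigma>(p := \<sigma> (Suc p), Suc p := \<sigma> p))"

definition weak_le :: "nat \<Rightarrow> (nat \<Rightarrow> nat) \<Rightarrow> (nat \<Rightarrow> nat) \<Rightarrow> bool" where
  "weak_le n = (weak_step n)\<^sup>*\<^sup>*"

end

theory Submission
  imports Defs
begin

text \<open>
  The weak order is inclusion of inversion sets. Exchanging an ascent \<open>ij\<close>
  creates exactly the one new inversion \<open>(i, j)\<close>. Conversely, if the inversions of \<open>\<sigma>\<close>
  are among those of \<open>\<tau> \<noteq> \<sigma>\<close>, some ascent of \<open>\<sigma>\<close> is an inversion of \<open>\<tau>\<close>: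
  otherwise \<open>inv \<tau> \<circ> \<sigma>\<close> would increase along \<open>{1..n}\<close> and hence be the identity.
  Exchanging that ascent brings \<open>\<sigma>\<close> closer to \<open>\<tau>\<close>.

  On the poset side, the total orders of \<open>\<Psi>(\<sigma>)\<close> and \<open>\<Psi>(\<tau>)\<close> are both the natural
  order of \<open>{1..n}\<close>, so \<open>\<theta>\<close> is the identity, and \<open>\<Psi>(\<sigma>) \<le> \<Psi>(\<tau>)\<close> says that
  every pair in natural order in \<open>\<tau>\<close> is so in \<open>\<sigma>\<close>, i.e. again that the inversions
  of \<open>\<sigma>\<close> are among those of \<open>\<tau>\<close>.
\<close>

text \<open>
  Since \<open>inv \<sigma>\<close> gives positions, \<open>inversions n \<sigma>\<close> is the set of pairs of letters \<open>a < b\<close>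
  that occur in the order \<open>b \<dots> a\<close> in the word \<open>\<sigma>(1)\<cdots>\<sigma>(n)\<close>.
\<close>

definition inversions :: "nat \<Rightarrow> (nat \<Rightarrow> nat) \<Rightarrow> (nat \<times> nat) set" where
  "inversions n \<sigma> = {(a, b). a \<in> {1..n} \<and> b \<in> {1..n} \<and> a < b \<and> inv \<sigma> b < inv \<sigma> a}"

lemma finite_inversions: "finite (inversions n \<sigma>)"
  by (rule finite_subset[of _ "{1..n} \<times> {1..n}"]) (auto simp: inversions_def)

lemma increasing_self_map_atLeastAtMost_fixes:
  fixes f :: "nat \<Rightarrow> nat"
  assumes maps: "f ` {a..b} \<subseteq> {a..b}"
    and incr: "\<And>k. a \<le> k \<Longrightarrow> k < b \<Longrightarrow> f k < f (Suc k)"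
    and x: "x \<in> {a..b}"
  shows "f x = x"
proof -
  from x have "a \<le> x" "x \<le> b" by auto
  have "x \<le> f x"
    using \<open>a \<le> x\<close>
  proof (induction rule: dec_induct)
    case base
    then show ?case using maps \<open>a \<le> x\<close> \<open>x \<le> b\<close> by (force simp: image_subset_iff)
  next
    case (step k)
    then show ?case using incr[of k] \<open>x \<le> b\<close> by simp
  qed
  moreover have "f x \<le> x"
    using \<open>x \<le> b\<close>
  proof (induction rule: inc_induct)
    case base
    then show ?case using maps \<open>a \<le> x\<close> \<open>x \<le> b\<close> by (force simp: image_subset_iff)
  next
    case (step k)
    then show ?case using incr[of k] \<open>a \<le> x\<close> by simp
  qed
  ultimately show ?thesis by simp
qed

lemma transpose_Suc_less_iff:
  assumes "i \<noteq> j"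
  shows "transpose p (Suc p) j < transpose p (Suc p) i \<longleftrightarrow>
           (j < i \<and> (j, i) \<noteq> (p, Suc p)) \<or> (i, j) = (p, Suc p)"
  using assms by (auto simp: transpose_def)

lemma fun_upd_swap_eq_comp_transpose: "f(p := f q, q := f p) = f \<circ> transpose p q"
  by (auto simp: transpose_def)

lemma weak_step_permutes:
  assumes "weak_step n \<sigma> \<tau>" "\<sigma> permutes {1..n}"
  shows "\<tau> permutes {1..n}"
proof -
  from assms(1) obtain p where p: "1 \<le> p" "p < n"
    and "\<tau> = \<sigma>(p := \<sigma> (Suc p), Suc p := \<sigma> p)"
    by (auto simp: weak_step_def)
  then have "\<tau> = \<sigma> \<circ> transpose p (Suc p)"
    by (simp add: fun_upd_swap_eq_comp_transpose)
  moreover have "transpose p (Suc p) permutes {1..n}"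
    using p by (intro permutes_swap_id) auto
  ultimately show ?thesis
    using permutes_compose assms(2) by metis
qed

lemma inversions_exchange_ascent:
  assumes \<sigma>: "\<sigma> permutes {1..n}" and p: "1 \<le> p" "p < n" and asc: "\<sigma> p < \<sigma> (Suc p)"
    and \<sigma>': "\<sigma>' = \<sigma>(p := \<sigma> (Suc p), Suc p := \<sigma> p)"
  shows "inversions n \<sigma>' = insert (\<sigma> p, \<sigma> (Suc p)) (inversions n \<sigma>)"
proof -
  have "\<sigma>' = \<sigma> \<circ> transpose p (Suc p)"
    using \<sigma>' by (simp add: fun_upd_swap_eq_comp_transpose)
  moreover have "inv (\<sigma> \<circ> transpose p (Suc p)) = transpose p (Suc p) \<circ> inv \<sigma>"
    by (simp add: o_inv_distrib permutes_bij[OF \<sigma>] inv_swap_id)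
  ultimately have inv_eq: "inv \<sigma>' = transpose p (Suc p) \<circ> inv \<sigma>"
    by simp
  have swap: "inv \<sigma>' b < inv \<sigma>' a \<longleftrightarrow>
      (inv \<sigma> b < inv \<sigma> a \<and> (b, a) \<noteq> (\<sigma> p, \<sigma> (Suc p))) \<or> (a, b) = (\<sigma> p, \<sigma> (Suc p))"
    if "a \<noteq> b" for a b
  proof -
    have "inv \<sigma> a \<noteq> inv \<sigma> b"
      using that by (simp add: inj_eq[OF permutes_inj[OF permutes_inv[OF \<sigma>]]])
    then show ?thesis
      using transpose_Suc_less_iff[of "inv \<sigma> a" "inv \<sigma> b" p]
      by (simp add: inv_eq permutes_inv_eq[OF \<sigma>] eq_commute[of _ "\<sigma> _"])
  qed
  have range: "\<sigma> p \<in> {1..n}" "\<sigma> (Suc p) \<in> {1..n}"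
    using p permutes_in_image[OF \<sigma>] by auto
  show ?thesis
    unfolding inversions_def using swap asc range by auto
qed

lemma weak_le_permutes:
  assumes "weak_le n \<sigma> \<tau>" "\<sigma> permutes {1..n}"
  shows "\<tau> permutes {1..n}"
  using assms unfolding weak_le_def
  by (induction rule: rtranclp_induct) (blast intro: weak_step_permutes)+

lemma weak_le_imp_inversions_subset:
  assumes "weak_le n \<sigma> \<tau>" "\<sigma> permutes {1..n}"
  shows "inversions n \<sigma> \<subseteq> inversions n \<tau>"
  using assms(1) unfolding weak_le_def
proof (induction rule: rtranclp_induct)
  case (step \<rho> \<rho>')
  then obtain p where "1 \<le> p" "p < n" "\<rho> p < \<rho> (Suc p)"
    and "\<rho>' = \<rho>(p := \<rho> (Suc p), Suc p := \<rho> p)"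
    by (auto simp: weak_step_def)
  moreover have "\<rho> permutes {1..n}"
    using weak_le_permutes[OF step.hyps(1)[folded weak_le_def] assms(2)] .
  ultimately show ?case
    using step.IH inversions_exchange_ascent by blast
qed simp

lemma ex_ascent_in_inversions:
  assumes \<sigma>: "\<sigma> permutes {1..n}" and \<tau>: "\<tau> permutes {1..n}"
    and sub: "inversions n \<sigma> \<subseteq> inversions n \<tau>" and ne: "\<sigma> \<noteq> \<tau>"
  shows "\<exists>p. 1 \<le> p \<and> p < n \<and> \<sigma> p < \<sigma> (Suc p) \<and> (\<sigma> p, \<sigma> (Suc p)) \<in> inversions n \<tau>"
proof (rule ccontr)
  assume no_ascent: "\<not> ?thesis"
  define q where "q = inv \<tau> \<circ> \<sigma>"
  have q_maps: "q ` {1..n} \<subseteq> {1..n}"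
    unfolding q_def using permutes_in_image[OF \<sigma>] permutes_in_image[OF permutes_inv[OF \<tau>]]
    by (simp add: image_subset_iff)
  have "q k < q (Suc k)" if k: "1 \<le> k" "k < n" for k
  proof -
    have range: "\<sigma> k \<in> {1..n}" "\<sigma> (Suc k) \<in> {1..n}"
      using k permutes_in_image[OF \<sigma>] by auto
    have "q k \<noteq> q (Suc k)"
      unfolding q_def
      by (simp add: inj_eq[OF permutes_inj[OF \<sigma>]] inj_eq[OF permutes_inj[OF permutes_inv[OF \<tau>]]])
    moreover have "\<not> q (Suc k) < q k"
    proof (cases "\<sigma> k < \<sigma> (Suc k)")
      case True
      with no_ascent k have "(\<sigma> k, \<sigma> (Suc k)) \<notin> inversions n \<tau>"
        by blast
      with True range show ?thesis
        by (simp add: inversions_def q_def)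
    next
      case False
      moreover have "\<sigma> (Suc k) \<noteq> \<sigma> k"
        by (simp add: inj_eq[OF permutes_inj[OF \<sigma>]])
      ultimately have "(\<sigma> (Suc k), \<sigma> k) \<in> inversions n \<sigma>"
        using range by (simp add: inversions_def permutes_inverses(2)[OF \<sigma>])
      with sub have "(\<sigma> (Suc k), \<sigma> k) \<in> inversions n \<tau>"
        by blast
      then show ?thesis
        by (simp add: inversions_def q_def)
    qed
    ultimately show ?thesis by simp
  qed
  then have q_id: "q x = x" if "x \<in> {1..n}" for x
    using increasing_self_map_atLeastAtMost_fixes[OF q_maps] that by blast
  have "\<sigma> x = \<tau> x" for x
  proof (cases "x \<in> {1..n}")
    case True
    then have "inv \<tau> (\<sigma> x) = x"
      using q_id by (simp add: q_def)
    then show ?thesis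
      by (metis permutes_inverses(1)[OF \<tau>])
  next
    case False
    then show ?thesis
      by (simp add: permutes_not_in[OF \<sigma>] permutes_not_in[OF \<tau>])
  qed
  with ne show False by auto
qed

lemma inversions_subset_imp_weak_le:
  assumes "\<sigma> permutes {1..n}" "\<tau> permutes {1..n}" "inversions n \<sigma> \<subseteq> inversions n \<tau>"
  shows "weak_le n \<sigma> \<tau>"
  using assms
proof (induction "card (inversions n \<tau> - inversions n \<sigma>)" arbitrary: \<sigma> rule: less_induct)
  case less
  show ?case
  proof (cases "\<sigma> = \<tau>")
    case True
    then show ?thesis by (simp add: weak_le_def)
  next
    case False
    with less.prems obtain p where p: "1 \<le> p" "p < n" "\<sigma> p < \<sigma> (Suc p)"
      and new: "(\<sigma> p, \<sigma> (Suc p)) \<in> inversions n \<tau>"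
      using ex_ascent_in_inversions by meson
    define \<sigma>' where "\<sigma>' = \<sigma>(p := \<sigma> (Suc p), Suc p := \<sigma> p)"
    have step: "weak_step n \<sigma> \<sigma>'"
      unfolding weak_step_def \<sigma>'_def using p by blast
    have inv': "inversions n \<sigma>' = insert (\<sigma> p, \<sigma> (Suc p)) (inversions n \<sigma>)"
      using inversions_exchange_ascent[OF less.prems(1) p \<sigma>'_def] .
    have fresh: "(\<sigma> p, \<sigma> (Suc p)) \<notin> inversions n \<sigma>"
      using p(3) by (simp add: inversions_def permutes_inverses(2)[OF less.prems(1)])
    then have remaining: "inversions n \<tau> - inversions n \<sigma>' =
        (inversions n \<tau> - inversions n \<sigma>) - {(\<sigma> p, \<sigma> (Suc p))}"
      by (auto simp: inv')
    have "card (inversions n \<tau> - inversions n \<sigma>') < card (inversions n \<tau> - inversions n \<sigma>)"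
      unfolding remaining by (rule card_Diff1_less) (use new fresh in \<open>auto simp: finite_inversions\<close>)
    moreover have "inversions n \<sigma>' \<subseteq> inversions n \<tau>"
      using new less.prems(3) by (simp add: inv')
    ultimately have "weak_le n \<sigma>' \<tau>"
      using less.hyps weak_step_permutes[OF step less.prems(1)] less.prems(2) by blast
    with step show ?thesis
      unfolding weak_le_def by (rule converse_rtranclp_into_rtranclp)
  qed
qed

lemma weak_le_iff_inversions_subset:
  assumes "\<sigma> permutes {1..n}" "\<tau> permutes {1..n}"
  shows "weak_le n \<sigma> \<tau> \<longleftrightarrow> inversions n \<sigma> \<subseteq> inversions n \<tau>"
  using assms weak_le_imp_inversions_subset inversions_subset_imp_weak_le by blast

lemma carrier_Psi [simp]: "carrier (Psi n \<sigma>) = {1..n}"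
  by (simp add: Psi_def)

lemma hle_Psi [simp]: "hle (Psi n \<sigma>) a b \<longleftrightarrow> a \<le> b \<and> inv \<sigma> a \<le> inv \<sigma> b"
  by (simp add: Psi_def)

lemma tle_Psi [simp]: "tle (Psi n \<sigma>) a b \<longleftrightarrow> a \<le> b"
  by (auto simp: tle_def Psi_def)

lemma is_theta_Psi_id: "is_theta (Psi n \<sigma>) (Psi n \<tau>) id"
  by (simp add: is_theta_def)

lemma is_theta_Psi_fixes:
  assumes f: "is_theta (Psi n \<sigma>) (Psi n \<tau>) f" and x: "x \<in> {1..n}"
  shows "f x = x"
proof (rule increasing_self_map_atLeastAtMost_fixes[OF _ _ x])
  have bij: "bij_betw f {1..n} {1..n}"
    using f by (simp add: is_theta_def)
  then show "f ` {1..n} \<subseteq> {1..n}"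
    by (simp add: bij_betw_def)
  fix k assume k: "1 \<le> k" "k < n"
  then have "f k \<le> f (Suc k)"
    using f by (simp add: is_theta_def)
  moreover have "f k \<noteq> f (Suc k)"
    using k bij_betw_imp_inj_on[OF bij] by (simp add: inj_on_eq_iff)
  ultimately show "f k < f (Suc k)" by simp
qed

lemma inversions_subset_iff:
  "inversions n \<sigma> \<subseteq> inversions n \<tau> \<longleftrightarrow>
     (\<forall>a\<in>{1..n}. \<forall>b\<in>{1..n}. a < b \<longrightarrow> inv \<tau> a \<le> inv \<tau> b \<longrightarrow> inv \<sigma> a \<le> inv \<sigma> b)"
  unfolding inversions_def subset_iff by (auto simp del: atLeastAtMost_iff simp flip: not_le)

lemma pp_le_Psi_iff_inversions_subset:
  "pp_le (Psi n \<sigma>) (Psi n \<tau>) \<longleftrightarrow> inversions n \<sigma> \<subseteq> inversions n \<tau>"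
proof
  assume "pp_le (Psi n \<sigma>) (Psi n \<tau>)"
  then obtain f where f: "is_theta (Psi n \<sigma>) (Psi n \<tau>) f"
    and reflect: "\<forall>a\<in>{1..n}. \<forall>b\<in>{1..n}. hle (Psi n \<tau>) (f a) (f b) \<longrightarrow> hle (Psi n \<sigma>) a b"
    unfolding pp_le_def by auto
  show "inversions n \<sigma> \<subseteq> inversions n \<tau>"
    unfolding inversions_subset_iff using reflect is_theta_Psi_fixes[OF f] by auto
next
  assume "inversions n \<sigma> \<subseteq> inversions n \<tau>"
  then have reflect: "hle (Psi n \<sigma>) a b"
    if "a \<in> {1..n}" "b \<in> {1..n}" "hle (Psi n \<tau>) a b" for a b
    using that unfolding inversions_subset_iff by (cases "a = b") auto
  show "pp_le (Psi n \<sigma>) (Psi n \<tau>)"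
    unfolding pp_le_def
  proof (intro exI[of _ id] conjI is_theta_Psi_id ballI impI)
    show "hle (Psi n \<sigma>) a b" if "a \<in> carrier (Psi n \<sigma>)" "b \<in> carrier (Psi n \<sigma>)"
      and "hle (Psi n \<tau>) (id a) (id b)" for a b
      using reflect that by simp
  qed
qed

theorem theorem15:
  fixes n :: nat and \<sigma> \<tau> :: "nat \<Rightarrow> nat"
  assumes "\<sigma> permutes {1..n}" and "\<tau> permutes {1..n}"
  shows "weak_le n \<sigma> \<tau> \<longleftrightarrow> pp_le (Psi n \<sigma>) (Psi n \<tau>)"
  using assms by (simp add: weak_le_iff_inversions_subset pp_le_Psi_iff_inversions_subset)

end
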